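(* A marker-per-face strategy with point-plane data does not uniquely determine a scene consisting of several convex polyhedra: there exist two distinct finite sets $S\neq S'$ of pairwise disjoint convex polyhedra in $\mathbb{R}^3$ and a finite set $M$ of point-plane markers that is a marker-per-face markup of both $S$ and $S'$. Moreover, the same holds with point-normal markers in place of point-plane markers.
   Context: A polyhedron is a closed, connected, three-dimensional region of $\mathbb{R}^3$ whose boundary consists of finitely many polygons (faces) such that every edge of every face is shared with exactly one other face, two faces intersect only in shared edges or vertices, and faces sharing a vertex can be cyclically ordered so that consecutive ones share an edge; faces are taken maximal (closures of connected components of the locally planar part of the boundary). A point-plane marker is a pair $(p,R)$ with $R$ a plane and $p\in R$; a finite set $M$ of such markers is a marker-per-face markup of a finite set $S$ of polyhedra if each $(p,R)\in M$ has $p$ on some face $F$ of some polyhedron in $S$ with $R$ the plane of $F$, and every face $F$ of every polyhedron in $S$ contains the point of some marker whose plane is the plane of $F$. A point-normal marker is a pair $(p,n)$ with $n$ a unit vector; the markup condition is the same with "the plane of $F$" replaced by "the outward unit normal on $F$". *)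

theory Defs
  imports "HOL-Analysis.Analysis"
begin

text \<open>Its faces (maximal
planar pieces of the boundary) are exactly its facets.\<close>
definition convex_polyhedron :: "(real^3) set \<Rightarrow> bool" where
  "convex_polyhedron P \<longleftrightarrow> polytope P \<and> aff_dim P = 3"

definition is_plane :: "(real^3) set \<Rightarrow> bool" where
  "is_plane R \<longleftrightarrow> affine R \<and> aff_dim R = 2"

definition plane_of :: "(real^3) set \<Rightarrow> (real^3) set" where
  "plane_of F = affine hull F"

definition outward_unit_normal :: "(real^3) set \<Rightarrow> (real^3) set \<Rightarrow> real^3 \<Rightarrow> bool" where
  "outward_unit_normal P F n \<longleftrightarrow> norm n = 1 \<and> (\<forall>x\<in>P. \<forall>y\<in>F. n \<bullet> x \<le> n \<bullet> y)"

definition point_plane_markup :: "((real^3) \<times> (real^3) set) set \<Rightarrow> (real^3) set set \<Rightarrow> bool" where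
  "point_plane_markup M S \<longleftrightarrow>
     finite M \<and> finite S \<and>
     (\<forall>(p, R)\<in>M. is_plane R \<and> p \<in> R) \<and>
     (\<forall>(p, R)\<in>M. \<exists>P\<in>S. \<exists>F. F facet_of P \<and> p \<in> F \<and> R = plane_of F) \<and>
     (\<forall>P\<in>S. \<forall>F. F facet_of P \<longrightarrow> (\<exists>(p, R)\<in>M. p \<in> F \<and> R = plane_of F))"

definition point_normal_markup :: "((real^3) \<times> (real^3)) set \<Rightarrow> (real^3) set set \<Rightarrow> bool" where
  "point_normal_markup M S \<longleftrightarrow>
     finite M \<and> finite S \<and>
     (\<forall>(p, n)\<in>M. norm n = 1) \<and>
     (\<forall>(p, n)\<in>M. \<exists>P\<in>S. \<exists>F. F facet_of P \<and> p \<in> F \<and> outward_unit_normal P F n) \<and>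
     (\<forall>P\<in>S. \<forall>F. F facet_of P \<longrightarrow> (\<exists>(p, n)\<in>M. p \<in> F \<and> outward_unit_normal P F n))"

definition convex_scene :: "(real^3) set set \<Rightarrow> bool" where
  "convex_scene S \<longleftrightarrow> finite S \<and> (\<forall>P\<in>S. convex_polyhedron P) \<and> pairwise disjnt S"

end

theory Submission
  imports Defs
begin

text \<open>
  Idea: take two different scenes S and S' of three pairwise disjoint axis-parallel boxes
  in which every face of every box of one scene is coplanar with, and touches, a face with
  the same outward normal of a box of the other scene.  Placing one marker at such a touching
  point for each face of each box gives a single finite marker set that is a markup of both
  scenes, for point-plane data (plane of the face) and for point-normal data alike.
\<close>

definition facet_data_matched ::
    "('a::euclidean_space set \<Rightarrow> 'a set \<Rightarrow> 'l \<Rightarrow> bool) \<Rightarrow> 'a set set \<Rightarrow> 'a set set \<Rightarrow> bool" where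
  "facet_data_matched rel S S' \<longleftrightarrow>
     (\<forall>P\<in>S. \<forall>F. F facet_of P \<longrightarrow>
        (\<exists>p\<in>F. \<exists>L. rel P F L \<and> (\<exists>P'\<in>S'. \<exists>F'. F' facet_of P' \<and> p \<in> F' \<and> rel P' F' L)))"

lemma facet_data_matched_choice:
  assumes "facet_data_matched rel S S'"
  obtains m where
    "\<And>P F. P \<in> S \<Longrightarrow> F facet_of P \<Longrightarrow> fst (m (P, F)) \<in> F \<and> rel P F (snd (m (P, F))) \<and>
       (\<exists>P'\<in>S'. \<exists>F'. F' facet_of P' \<and> fst (m (P, F)) \<in> F' \<and> rel P' F' (snd (m (P, F))))"
proof -
  have "\<forall>PF. \<exists>x. fst PF \<in> S \<longrightarrow> snd PF facet_of fst PF \<longrightarrow>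
       fst x \<in> snd PF \<and> rel (fst PF) (snd PF) (snd x) \<and>
       (\<exists>P'\<in>S'. \<exists>F'. F' facet_of P' \<and> fst x \<in> F' \<and> rel P' F' (snd x))"
    using assms unfolding facet_data_matched_def by fastforce
  then obtain m where "\<forall>PF. fst PF \<in> S \<longrightarrow> snd PF facet_of fst PF \<longrightarrow>
       fst (m PF) \<in> snd PF \<and> rel (fst PF) (snd PF) (snd (m PF)) \<and>
       (\<exists>P'\<in>S'. \<exists>F'. F' facet_of P' \<and> fst (m PF) \<in> F' \<and> rel P' F' (snd (m PF)))"
    by metis
  then show thesis using that[of m] by auto
qed

text \<open>Finiteness
  comes from polytopes having finitely many facets.\<close>

lemma common_marker_set:
  fixes S S' :: "'a::euclidean_space set set"
  assumes fin: "finite S" "finite S'" and poly: "\<forall>P\<in>S \<union> S'. polytope P"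
    and match: "facet_data_matched rel S S'" "facet_data_matched rel S' S"
  shows "\<exists>M. finite M \<and>
     (\<forall>(p, L)\<in>M. \<exists>P\<in>S. \<exists>F. F facet_of P \<and> p \<in> F \<and> rel P F L) \<and>
     (\<forall>(p, L)\<in>M. \<exists>P\<in>S'. \<exists>F. F facet_of P \<and> p \<in> F \<and> rel P F L) \<and>
     (\<forall>P\<in>S. \<forall>F. F facet_of P \<longrightarrow> (\<exists>(p, L)\<in>M. p \<in> F \<and> rel P F L)) \<and>
     (\<forall>P\<in>S'. \<forall>F. F facet_of P \<longrightarrow> (\<exists>(p, L)\<in>M. p \<in> F \<and> rel P F L))"
proof -
  obtain m where m: "\<And>P F. P \<in> S \<Longrightarrow> F facet_of P \<Longrightarrow> fst (m (P, F)) \<in> F \<and> rel P F (snd (m (P, F))) \<and>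
       (\<exists>P'\<in>S'. \<exists>F'. F' facet_of P' \<and> fst (m (P, F)) \<in> F' \<and> rel P' F' (snd (m (P, F))))"
    using facet_data_matched_choice[OF match(1)] by blast
  obtain m' where m': "\<And>P F. P \<in> S' \<Longrightarrow> F facet_of P \<Longrightarrow> fst (m' (P, F)) \<in> F \<and> rel P F (snd (m' (P, F))) \<and>
       (\<exists>P'\<in>S. \<exists>F'. F' facet_of P' \<and> fst (m' (P, F)) \<in> F' \<and> rel P' F' (snd (m' (P, F))))"
    using facet_data_matched_choice[OF match(2)] by blast
  define facets where "facets T = Sigma T (\<lambda>P. {F. F facet_of P})" for T :: "'a set set"
  have fin_facets: "finite (facets S)" "finite (facets S')"
    using fin poly finite_polytope_facets by (auto simp: facets_def)
  define M where "M = m ` facets S \<union> m' ` facets S'"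
  define on where "on T x \<longleftrightarrow> (\<exists>P\<in>T. \<exists>F. F facet_of P \<and> fst x \<in> F \<and> rel P F (snd x))" for T x
  have on_both: "on S x \<and> on S' x" if x: "x \<in> M" for x
  proof (cases "x \<in> m ` facets S")
    case True
    then obtain P F where "P \<in> S" "F facet_of P" "x = m (P, F)" by (auto simp: facets_def)
    then show ?thesis using m[of P F] unfolding on_def by blast
  next
    case False
    then obtain P F where "P \<in> S'" "F facet_of P" "x = m' (P, F)"
      using x by (auto simp: M_def facets_def)
    then show ?thesis using m'[of P F] unfolding on_def by blast
  qed
  have "finite M" using fin_facets by (simp add: M_def)
  moreover have "\<forall>(p, L)\<in>M. \<exists>P\<in>S. \<exists>F. F facet_of P \<and> p \<in> F \<and> rel P F L"
    using on_both unfolding on_def by fastforce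
  moreover have "\<forall>(p, L)\<in>M. \<exists>P\<in>S'. \<exists>F. F facet_of P \<and> p \<in> F \<and> rel P F L"
    using on_both unfolding on_def by fastforce
  moreover have "\<forall>P\<in>S. \<forall>F. F facet_of P \<longrightarrow> (\<exists>(p, L)\<in>M. p \<in> F \<and> rel P F L)"
  proof (intro ballI allI impI)
    fix P F assume "P \<in> S" "F facet_of P"
    moreover from this have "m (P, F) \<in> M" by (auto simp: M_def facets_def)
    ultimately show "\<exists>(p, L)\<in>M. p \<in> F \<and> rel P F L"
      using m[of P F] by (auto simp: case_prod_beta intro!: bexI[of _ "m (P, F)"])
  qed
  moreover have "\<forall>P\<in>S'. \<forall>F. F facet_of P \<longrightarrow> (\<exists>(p, L)\<in>M. p \<in> F \<and> rel P F L)"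
  proof (intro ballI allI impI)
    fix P F assume "P \<in> S'" "F facet_of P"
    moreover from this have "m' (P, F) \<in> M" by (auto simp: M_def facets_def)
    ultimately show "\<exists>(p, L)\<in>M. p \<in> F \<and> rel P F L"
      using m'[of P F] by (auto simp: case_prod_beta intro!: bexI[of _ "m' (P, F)"])
  qed
  ultimately show ?thesis by blast
qed

lemma facet_plane:
  assumes "F facet_of P" "convex_polyhedron P"
  shows "is_plane (plane_of F)" "F \<subseteq> plane_of F"
  using assms by (auto simp: is_plane_def plane_of_def facet_of_def convex_polyhedron_def hull_subset)

lemma plane_markup_of_matched:
  assumes fin: "finite S" "finite S'" and conv: "\<And>P. P \<in> S \<union> S' \<Longrightarrow> convex_polyhedron P"
    and match: "facet_data_matched (\<lambda>P F R. R = plane_of F) S S'"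
               "facet_data_matched (\<lambda>P F R. R = plane_of F) S' S"
  shows "\<exists>M. point_plane_markup M S \<and> point_plane_markup M S'"
proof -
  have poly: "\<forall>P\<in>S \<union> S'. polytope P" using conv by (simp add: convex_polyhedron_def)
  from common_marker_set[OF fin poly match] obtain M where M: "finite M"
      "\<forall>(p, R)\<in>M. \<exists>P\<in>S. \<exists>F. F facet_of P \<and> p \<in> F \<and> R = plane_of F"
      "\<forall>(p, R)\<in>M. \<exists>P\<in>S'. \<exists>F. F facet_of P \<and> p \<in> F \<and> R = plane_of F"
      "\<forall>P\<in>S. \<forall>F. F facet_of P \<longrightarrow> (\<exists>(p, R)\<in>M. p \<in> F \<and> R = plane_of F)"
      "\<forall>P\<in>S'. \<forall>F. F facet_of P \<longrightarrow> (\<exists>(p, R)\<in>M. p \<in> F \<and> R = plane_of F)"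
    by blast
  have planes: "\<forall>(p, R)\<in>M. is_plane R \<and> p \<in> R"
  proof clarify
    fix p R assume "(p, R) \<in> M"
    then obtain P F where "P \<in> S" "F facet_of P" "p \<in> F" "R = plane_of F" using M(2) by blast
    with facet_plane[of F P] conv[of P] show "is_plane R \<and> p \<in> R" by blast
  qed
  show ?thesis unfolding point_plane_markup_def
    by (intro exI[of _ M] conjI; fact M fin planes)
qed

lemma normal_markup_of_matched:
  assumes fin: "finite S" "finite S'" and conv: "\<And>P. P \<in> S \<union> S' \<Longrightarrow> convex_polyhedron P"
    and match: "facet_data_matched outward_unit_normal S S'"
               "facet_data_matched outward_unit_normal S' S"
  shows "\<exists>M. point_normal_markup M S \<and> point_normal_markup M S'"
proof -
  have poly: "\<forall>P\<in>S \<union> S'. polytope P" using conv by (simp add: convex_polyhedron_def)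
  from common_marker_set[OF fin poly match] obtain M where M: "finite M"
      "\<forall>(p, n)\<in>M. \<exists>P\<in>S. \<exists>F. F facet_of P \<and> p \<in> F \<and> outward_unit_normal P F n"
      "\<forall>(p, n)\<in>M. \<exists>P\<in>S'. \<exists>F. F facet_of P \<and> p \<in> F \<and> outward_unit_normal P F n"
      "\<forall>P\<in>S. \<forall>F. F facet_of P \<longrightarrow> (\<exists>(p, n)\<in>M. p \<in> F \<and> outward_unit_normal P F n)"
      "\<forall>P\<in>S'. \<forall>F. F facet_of P \<longrightarrow> (\<exists>(p, n)\<in>M. p \<in> F \<and> outward_unit_normal P F n)"
    by blast
  have units: "\<forall>(p, n)\<in>M. norm n = 1"
    using M(2) unfolding outward_unit_normal_def by fast
  show ?thesis unfolding point_normal_markup_def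
    by (intro exI[of _ M] conjI; fact M fin units)
qed

text \<open>The box cbox a b is the intersection of the 2n halfspaces
  side_normal k \<bullet> x \<le> side_offset a b k, where k = (i, True) bounds coordinate i from
  above by b_i and k = (i, False) from below by a_i.\<close>

definition side_normal :: "'n::finite \<times> bool \<Rightarrow> real^'n" where
  "side_normal k = (if snd k then axis (fst k) 1 else - axis (fst k) 1)"

definition side_offset :: "real^'n \<Rightarrow> real^'n \<Rightarrow> 'n::finite \<times> bool \<Rightarrow> real" where
  "side_offset a b k = (if snd k then b $ fst k else - a $ fst k)"

lemma side_normal_nonzero: "side_normal k \<noteq> 0"
  by (simp add: side_normal_def)

lemma side_hyperplane:
  "{x. side_normal (i, t) \<bullet> x = side_offset a b (i, t)} =
   {x. x $ i = (if t then b $ i else a $ i)}"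
  by (auto simp: side_normal_def side_offset_def inner_axis')

lemma interior_box_nonempty:
  fixes a b :: "real^'n"
  assumes "\<And>i. a $ i < b $ i"
  shows "interior (cbox a b) \<noteq> {}"
proof -
  have "(\<chi> j. (a $ j + b $ j) / 2) \<in> box a b" using assms by (simp add: mem_box_cart)
  then show ?thesis by auto
qed

lemma aff_dim_box:
  fixes a b :: "real^'n"
  assumes "\<And>i. a $ i < b $ i"
  shows "aff_dim (cbox a b) = CARD('n)"
proof -
  have "aff_dim (cbox a b) = aff_dim (affine hull (cbox a b))" by simp
  also have "\<dots> = CARD('n)"
    using affine_hull_nonempty_interior[OF interior_box_nonempty[OF assms]] by simp
  finally show ?thesis .
qed

text \<open>This follows from the explicit
  description of facets of a polyhedron given by an irredundant halfspace representation:
  dropping any one of the 2n halfspaces strictly enlarges the box.\<close>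

lemma facet_of_box:
  fixes a b :: "real^'n"
  assumes ab: "\<And>i. a $ i < b $ i"
  shows "F facet_of cbox a b \<longleftrightarrow>
    (\<exists>i. F = cbox a b \<inter> {x. x $ i = a $ i} \<or> F = cbox a b \<inter> {x. x $ i = b $ i})"
proof -
  define g where "g k = {x. side_normal k \<bullet> x \<le> side_offset a b k}" for k
  have frontier_g: "frontier (g k) = {x. side_normal k \<bullet> x = side_offset a b k}" for k
    unfolding g_def by (simp add: frontier_halfspace_le side_normal_nonzero)
  have hull: "affine hull (cbox a b) = UNIV"
    by (rule affine_hull_nonempty_interior[OF interior_box_nonempty[OF ab]])
  have inter: "\<Inter>(range g) = cbox a b"
  proof (intro set_eqI iffI)
    fix x assume "x \<in> \<Inter>(range g)"
    then have "x \<in> g (i, True)" "x \<in> g (i, False)" for i by auto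
    then show "x \<in> cbox a b"
      by (auto simp: g_def side_normal_def side_offset_def mem_box_cart inner_axis')
  qed (auto simp: g_def side_normal_def side_offset_def mem_box_cart inner_axis')
  have "F facet_of cbox a b \<longleftrightarrow>
      (\<exists>h. h \<in> range g \<and> F = cbox a b \<inter> {x. side_normal (inv g h) \<bullet> x = side_offset a b (inv g h)})"
  proof (rule facet_of_polyhedron_explicit)
    show "finite (range g)" by simp
    show "cbox a b = affine hull cbox a b \<inter> \<Inter> (range g)" using hull inter by simp
    show "side_normal (inv g h) \<noteq> 0 \<and> h = {x. side_normal (inv g h) \<bullet> x \<le> side_offset a b (inv g h)}"
      if "h \<in> range g" for h
      using f_inv_into_f[OF that] side_normal_nonzero by (simp add: g_def)
    show "cbox a b \<subset> affine hull cbox a b \<inter> \<Inter> H" if H: "H \<subset> range g" for H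
    proof -
      obtain i t where missing: "g (i, t) \<notin> H" using H by auto
      define p where "p = (\<chi> j. if j = i then (if t then b $ i + 1 else a $ i - 1) else a $ j)"
      have "p \<in> h" if "h \<in> H" for h
      proof -
        obtain k where "h = g k" using \<open>h \<in> H\<close> H by blast
        obtain j s where k: "k = (j, s)" by (cases k)
        have h: "h = g (j, s)" using \<open>h = g k\<close> k by simp
        have "(j, s) \<noteq> (i, t)"
        proof
          assume "(j, s) = (i, t)"
          then show False using missing \<open>h \<in> H\<close> h by simp
        qed
        then show ?thesis using ab[of i] ab[of j] h
          by (auto simp: g_def side_normal_def side_offset_def p_def inner_axis' less_imp_le)
      qed
      moreover have "p \<notin> cbox a b" using ab[of i] by (auto simp: mem_box_cart p_def intro!: exI[of _ i])
      moreover have "cbox a b \<subseteq> \<Inter> H" using inter H by blast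
      ultimately show ?thesis using hull by auto
    qed
  qed
  also have "\<dots> \<longleftrightarrow> (\<exists>k. F = cbox a b \<inter> frontier (g k))"
  proof -
    have hyperplane_g: "{x. side_normal (inv g (g k)) \<bullet> x = side_offset a b (inv g (g k))} = frontier (g k)"
      for k using frontier_g[of "inv g (g k)"] f_inv_into_f[of "g k" g UNIV] by simp
    show ?thesis
    proof
      assume "\<exists>h. h \<in> range g \<and>
          F = cbox a b \<inter> {x. side_normal (inv g h) \<bullet> x = side_offset a b (inv g h)}"
      then obtain k where
          "F = cbox a b \<inter> {x. side_normal (inv g (g k)) \<bullet> x = side_offset a b (inv g (g k))}"
        by blast
      then show "\<exists>k. F = cbox a b \<inter> frontier (g k)" by (simp only: hyperplane_g) blast
    next
      assume "\<exists>k. F = cbox a b \<inter> frontier (g k)"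
      then obtain k where "F = cbox a b \<inter> frontier (g k)" by blast
      then show "\<exists>h. h \<in> range g \<and>
          F = cbox a b \<inter> {x. side_normal (inv g h) \<bullet> x = side_offset a b (inv g h)}"
        by (intro exI[of _ "g k"]) (simp add: hyperplane_g)
    qed
  qed
  also have "\<dots> \<longleftrightarrow> (\<exists>i. F = cbox a b \<inter> {x. x $ i = a $ i} \<or> F = cbox a b \<inter> {x. x $ i = b $ i})"
    by (simp only: frontier_g split_paired_Ex side_hyperplane ex_bool_eq if_True if_False disj_commute)
  finally show ?thesis .
qed

lemma affine_hull_box_side:
  fixes a b :: "real^'n"
  assumes ab: "\<And>i. a $ i < b $ i" and c: "c = a $ i \<or> c = b $ i"
  shows "affine hull (cbox a b \<inter> {x. x $ i = c}) = {x. x $ i = c}"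
proof -
  let ?F = "cbox a b \<inter> {x. x $ i = c}"
  have hyperplane: "{x::real^'n. x $ i = c} = {x. axis i 1 \<bullet> x = c}"
    by (simp add: inner_axis')
  have "?F facet_of cbox a b" using c facet_of_box[OF ab, of ?F] by blast
  moreover note aff_dim_box[OF ab]
  ultimately have "?F \<noteq> {}" "aff_dim ?F = CARD('n) - 1" by (auto simp: facet_of_def)
  show ?thesis
  proof (rule affine_dim_equal)
    show "affine {x::real^'n. x $ i = c}" unfolding hyperplane by (rule affine_hyperplane)
    then show "affine hull ?F \<subseteq> {x. x $ i = c}" by (intro hull_minimal) auto
    show "aff_dim (affine hull ?F) = aff_dim {x::real^'n. x $ i = c}"
      using \<open>aff_dim ?F = CARD('n) - 1\<close> unfolding hyperplane
      by (simp add: axis_eq_0_iff)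
  qed (use \<open>?F \<noteq> {}\<close> in auto)
qed

lemma outward_normal_upper_side:
  "outward_unit_normal (cbox a b) (cbox a b \<inter> {x. x $ i = b $ i}) (axis i 1)"
  by (auto simp: outward_unit_normal_def inner_axis' mem_box_cart)

lemma outward_normal_lower_side:
  "outward_unit_normal (cbox a b) (cbox a b \<inter> {x. x $ i = a $ i}) (- axis i 1)"
  by (auto simp: outward_unit_normal_def inner_axis' mem_box_cart)

definition boxes :: "((real^'n) \<times> (real^'n)) set \<Rightarrow> (real^'n) set set" where
  "boxes B = (\<lambda>(a, b). cbox a b) ` B"

definition nondegenerate_boxes :: "((real^'n) \<times> (real^'n)) set \<Rightarrow> bool" where
  "nondegenerate_boxes B \<longleftrightarrow> (\<forall>(a, b)\<in>B. \<forall>i. a $ i < b $ i)"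

definition boxes_meet :: "real^'n \<Rightarrow> real^'n \<Rightarrow> real^'n \<Rightarrow> real^'n \<Rightarrow> bool" where
  "boxes_meet a b a' b' \<longleftrightarrow> (\<forall>j. max (a $ j) (a' $ j) \<le> min (b $ j) (b' $ j))"

definition sides_supported :: "((real^'n) \<times> (real^'n)) set \<Rightarrow> ((real^'n) \<times> (real^'n)) set \<Rightarrow> bool" where
  "sides_supported B B' \<longleftrightarrow>
     (\<forall>(a, b)\<in>B. \<forall>i. (\<exists>(a', b')\<in>B'. a' $ i = a $ i \<and> boxes_meet a b a' b') \<and>
                      (\<exists>(a', b')\<in>B'. b' $ i = b $ i \<and> boxes_meet a b a' b'))"

lemma common_point_lower_sides:
  assumes "boxes_meet a b a' b'" "a' $ i = a $ i"
  shows "(\<chi> j. max (a $ j) (a' $ j)) \<in> (cbox a b \<inter> {x. x $ i = a $ i}) \<inter> (cbox a' b' \<inter> {x. x $ i = a' $ i})"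
  using assms by (auto simp: boxes_meet_def mem_box_cart)

lemma common_point_upper_sides:
  assumes "boxes_meet a b a' b'" "b' $ i = b $ i"
  shows "(\<chi> j. min (b $ j) (b' $ j)) \<in> (cbox a b \<inter> {x. x $ i = b $ i}) \<inter> (cbox a' b' \<inter> {x. x $ i = b' $ i})"
  using assms by (auto simp: boxes_meet_def mem_box_cart)

lemma box_facet_shared:
  fixes B B' :: "((real^3) \<times> (real^3)) set"
  assumes P: "P \<in> boxes B" and nd: "nondegenerate_boxes B" "nondegenerate_boxes B'"
    and supp: "sides_supported B B'" and F: "F facet_of P"
  shows "\<exists>p\<in>F. \<exists>P'\<in>boxes B'. \<exists>F'. F' facet_of P' \<and> p \<in> F' \<and> plane_of F' = plane_of F \<and>
           (\<exists>n. outward_unit_normal P F n \<and> outward_unit_normal P' F' n)"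
proof -
  obtain a b where ab: "(a, b) \<in> B" and P_eq: "P = cbox a b" using P by (auto simp: boxes_def)
  note F = F[unfolded P_eq]
  have ab_lt: "\<And>i. a $ i < b $ i" using nd(1) ab by (auto simp: nondegenerate_boxes_def)
  obtain i where "F = cbox a b \<inter> {x. x $ i = a $ i} \<or> F = cbox a b \<inter> {x. x $ i = b $ i}"
    using F facet_of_box[OF ab_lt] by blast
  then show ?thesis
  proof
    assume F_lower: "F = cbox a b \<inter> {x. x $ i = a $ i}"
    obtain a' b' where ab': "(a', b') \<in> B'" and "a' $ i = a $ i" "boxes_meet a b a' b'"
      using supp ab by (fastforce simp: sides_supported_def)
    have ab'_lt: "\<And>i. a' $ i < b' $ i" using nd(2) ab' by (auto simp: nondegenerate_boxes_def)
    define F' where "F' = cbox a' b' \<inter> {x. x $ i = a' $ i}"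
    have "F' facet_of cbox a' b'" unfolding F'_def facet_of_box[OF ab'_lt] by blast
    moreover have "plane_of F' = plane_of F"
      using affine_hull_box_side[OF ab'_lt, of "a' $ i" i] affine_hull_box_side[OF ab_lt, of "a $ i" i]
        \<open>a' $ i = a $ i\<close> by (simp add: plane_of_def F'_def F_lower)
    moreover have "cbox a' b' \<in> boxes B'" using ab' by (force simp: boxes_def)
    moreover have "(\<chi> j. max (a $ j) (a' $ j)) \<in> F" "(\<chi> j. max (a $ j) (a' $ j)) \<in> F'"
      using common_point_lower_sides[OF \<open>boxes_meet a b a' b'\<close> \<open>a' $ i = a $ i\<close>]
      unfolding F_lower F'_def by auto
    moreover have "outward_unit_normal P F (- axis i 1)" "outward_unit_normal (cbox a' b') F' (- axis i 1)"
      unfolding P_eq F_lower F'_def by (rule outward_normal_lower_side)+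
    ultimately show ?thesis by blast
  next
    assume F_upper: "F = cbox a b \<inter> {x. x $ i = b $ i}"
    obtain a' b' where ab': "(a', b') \<in> B'" and "b' $ i = b $ i" "boxes_meet a b a' b'"
      using supp ab by (fastforce simp: sides_supported_def)
    have ab'_lt: "\<And>i. a' $ i < b' $ i" using nd(2) ab' by (auto simp: nondegenerate_boxes_def)
    define F' where "F' = cbox a' b' \<inter> {x. x $ i = b' $ i}"
    have "F' facet_of cbox a' b'" unfolding F'_def facet_of_box[OF ab'_lt] by blast
    moreover have "plane_of F' = plane_of F"
      using affine_hull_box_side[OF ab'_lt, of "b' $ i" i] affine_hull_box_side[OF ab_lt, of "b $ i" i]
        \<open>b' $ i = b $ i\<close> by (simp add: plane_of_def F'_def F_upper)
    moreover have "cbox a' b' \<in> boxes B'" using ab' by (force simp: boxes_def)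
    moreover have "(\<chi> j. min (b $ j) (b' $ j)) \<in> F" "(\<chi> j. min (b $ j) (b' $ j)) \<in> F'"
      using common_point_upper_sides[OF \<open>boxes_meet a b a' b'\<close> \<open>b' $ i = b $ i\<close>]
      unfolding F_upper F'_def by auto
    moreover have "outward_unit_normal P F (axis i 1)" "outward_unit_normal (cbox a' b') F' (axis i 1)"
      unfolding P_eq F_upper F'_def by (rule outward_normal_upper_side)+
    ultimately show ?thesis by blast
  qed
qed

lemma boxes_facet_data_matched:
  fixes B B' :: "((real^3) \<times> (real^3)) set"
  assumes "nondegenerate_boxes B" "nondegenerate_boxes B'" "sides_supported B B'"
  shows "facet_data_matched (\<lambda>P F R. R = plane_of F) (boxes B) (boxes B')"
    and "facet_data_matched outward_unit_normal (boxes B) (boxes B')"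
proof -
  show "facet_data_matched (\<lambda>P F R. R = plane_of F) (boxes B) (boxes B')"
    unfolding facet_data_matched_def
  proof (intro ballI allI impI)
    fix P F assume "P \<in> boxes B" "F facet_of P"
    then obtain p P' F' where "p \<in> F" "P' \<in> boxes B'" "F' facet_of P'" "p \<in> F'"
        "plane_of F' = plane_of F"
      using box_facet_shared[OF \<open>P \<in> boxes B\<close> assms \<open>F facet_of P\<close>] by blast
    then show "\<exists>p\<in>F. \<exists>R. R = plane_of F \<and>
        (\<exists>P'\<in>boxes B'. \<exists>F'. F' facet_of P' \<and> p \<in> F' \<and> R = plane_of F')"
      by metis
  qed
  show "facet_data_matched outward_unit_normal (boxes B) (boxes B')"
    unfolding facet_data_matched_def
  proof (intro ballI allI impI)
    fix P F assume "P \<in> boxes B" "F facet_of P"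
    then obtain p P' F' n where "p \<in> F" "P' \<in> boxes B'" "F' facet_of P'" "p \<in> F'"
        "outward_unit_normal P F n" "outward_unit_normal P' F' n"
      using box_facet_shared[OF \<open>P \<in> boxes B\<close> assms \<open>F facet_of P\<close>] by blast
    then show "\<exists>p\<in>F. \<exists>n. outward_unit_normal P F n \<and>
        (\<exists>P'\<in>boxes B'. \<exists>F'. F' facet_of P' \<and> p \<in> F' \<and> outward_unit_normal P' F' n)"
      by blast
  qed
qed

lemma convex_polyhedron_box:
  fixes a b :: "real^3"
  assumes "\<And>i. a $ i < b $ i"
  shows "convex_polyhedron (cbox a b)"
  using aff_dim_box[OF assms] by (simp add: convex_polyhedron_def polytope_interval)

lemma convex_polyhedra_boxes:
  assumes "nondegenerate_boxes B" "P \<in> boxes B"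
  shows "convex_polyhedron P"
  using assms convex_polyhedron_box by (auto simp: boxes_def nondegenerate_boxes_def)

lemma disjnt_boxes_separated:
  fixes a b c d :: "real^3"
  assumes "b $ i < c $ i \<or> d $ i < a $ i"
  shows "disjnt (cbox a b) (cbox c d)"
  using assms by (auto simp: disjnt_def mem_box_cart) (meson order_trans not_le)+

lemma pairwise_disjnt_three: "disjnt X Y \<Longrightarrow> disjnt X Z \<Longrightarrow> disjnt Y Z \<Longrightarrow> pairwise disjnt {X, Y, Z}"
  by (auto simp: pairwise_insert disjnt_sym)

text \<open>The two scenes: three interlocking boxes in [0,3]^3, and the same configuration
  with the roles of the second and third coordinate exchanged.\<close>

definition example_left :: "((real^3) \<times> (real^3)) set" where
  "example_left = {(vector [0,0,0], vector [1,1,3]), (vector [0,2,0], vector [3,3,1]),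
                   (vector [2,0,2], vector [3,3,3])}"

definition example_right :: "((real^3) \<times> (real^3)) set" where
  "example_right = {(vector [0,0,0], vector [1,3,1]), (vector [0,0,2], vector [3,1,3]),
                    (vector [2,2,0], vector [3,3,3])}"

lemma example_nondegenerate: "nondegenerate_boxes example_left" "nondegenerate_boxes example_right"
  by (simp_all add: nondegenerate_boxes_def example_left_def example_right_def forall_3)

lemma example_sides_supported:
  "sides_supported example_left example_right" "sides_supported example_right example_left"
  by (simp_all add: sides_supported_def boxes_meet_def example_left_def example_right_def forall_3)

lemma example_scenes: "convex_scene (boxes example_left)" "convex_scene (boxes example_right)"
proof -
  have "boxes example_left = {cbox (vector [0,0,0]) (vector [1,1,3]),
      cbox (vector [0,2,0]) (vector [3,3,1]), cbox (vector [2,0,2]) (vector [3,3,3])}"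
    by (simp add: example_left_def boxes_def)
  moreover have "pairwise disjnt \<dots>"
    by (intro pairwise_disjnt_three; rule disjnt_boxes_separated[where i=1]
          disjnt_boxes_separated[where i=2] disjnt_boxes_separated[where i=3]; simp)
  ultimately show "convex_scene (boxes example_left)"
    using convex_polyhedra_boxes[OF example_nondegenerate(1)]
    by (simp add: convex_scene_def example_left_def)
next
  have "boxes example_right = {cbox (vector [0,0,0]) (vector [1,3,1]),
      cbox (vector [0,0,2]) (vector [3,1,3]), cbox (vector [2,2,0]) (vector [3,3,3])}"
    by (simp add: example_right_def boxes_def)
  moreover have "pairwise disjnt \<dots>"
    by (intro pairwise_disjnt_three; rule disjnt_boxes_separated[where i=1]
          disjnt_boxes_separated[where i=2] disjnt_boxes_separated[where i=3]; simp)
  ultimately show "convex_scene (boxes example_right)"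
    using convex_polyhedra_boxes[OF example_nondegenerate(2)]
    by (simp add: convex_scene_def example_right_def)
qed

lemma example_scenes_differ: "boxes example_left \<noteq> boxes example_right"
proof
  let ?x = "vector [1/2, 1/2, 3/2] :: real^3"
  assume same: "boxes example_left = boxes example_right"
  have "?x \<in> \<Union>(boxes example_left)"
    by (auto simp: example_left_def boxes_def mem_box_cart forall_3 intro!: bexI[of _ "(vector [0,0,0], vector [1,1,3])"])
  moreover have "?x \<notin> \<Union>(boxes example_right)"
    by (auto simp: example_right_def boxes_def mem_box_cart forall_3)
  ultimately show False using same by simp
qed

theorem mainTheorem4:
  shows "(\<exists>S S' M. convex_scene S \<and> convex_scene S' \<and> S \<noteq> S' \<and>
            point_plane_markup M S \<and> point_plane_markup M S') \<and>
         (\<exists>S S' M. convex_scene S \<and> convex_scene S' \<and> S \<noteq> S' \<and>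
            point_normal_markup M S \<and> point_normal_markup M S')"
proof -
  let ?S = "boxes example_left" and ?S' = "boxes example_right"
  have finite: "finite ?S" "finite ?S'" using example_scenes by (simp_all add: convex_scene_def)
  have convex: "convex_polyhedron P" if "P \<in> ?S \<union> ?S'" for P
    using that example_scenes by (auto simp: convex_scene_def)
  note matched = boxes_facet_data_matched[OF example_nondegenerate example_sides_supported(1)]
    boxes_facet_data_matched[OF example_nondegenerate(2,1) example_sides_supported(2)]
  obtain M where "point_plane_markup M ?S" "point_plane_markup M ?S'"
    using plane_markup_of_matched[OF finite convex matched(1,3)] by blast
  moreover obtain N where "point_normal_markup N ?S" "point_normal_markup N ?S'"
    using normal_markup_of_matched[OF finite convex matched(2,4)] by blast
  ultimately show ?thesis using example_scenes example_scenes_differ by blast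
qed

end
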